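(* Let $t\in(0,1)$. For all $\eta$ sufficiently close to $t$, all $\theta\in\mathbb R/2\pi\mathbb Z$ and $z\in\mathbb H$, the function $P\mapsto|K_\eta(z,P)|$ has a unique maximum point on $\Sigma_{t,\theta}$.
   Context: $\mathbb H=\{x+iy:y>0\}$; $\mathbb H^{\mathbb C}=\mathbb C^2\ni P=(X(P),Y(P))$ with $\mathbb H$ embedded as real points; $Z=X+iY$, $\tilde Z=X-iY$; $\cosh\mathrm{dist}(x+iy,P):=1+\frac{(x-X)^2+(y-Y)^2}{2yY}$. For $\eta\in(0,1)$, $c_\eta=\frac4{4\eta-\eta^3}$ and $K_\eta(z,P)=\frac{z-\tilde Z(P)}{\bar z-Z(P)}e^{-c_\eta\cosh\mathrm{dist}(z,P)}$. $h_t(z,\theta)$: point at time $t$ of the unit-speed right horocycle (image of $t\mapsto -t+i$ under an orientation-preserving isometry) starting at $z=x+iy$ with velocity $y(\cos\theta\partial_x+\sin\theta\partial_y)$, continued holomorphically to complex $t$ with $|\Im t|<1$ as a point of $\mathbb C^2$. $\Sigma_{t,\theta}:=\{h_{-it}(z,\theta):z\in\mathbb H\}$. *)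

theory Defs
  imports "HOL-Analysis.Analysis"
begin

text \<open>Points of the complexified hyperbolic plane are pairs (X, Y) of complex numbers;
  a real point x + iy of the upper half plane corresponds to (x, y).\<close>

type_synonym cpoint = "complex \<times> complex"

definition Xc :: "cpoint \<Rightarrow> complex" where "Xc P = fst P"
definition Yc :: "cpoint \<Rightarrow> complex" where "Yc P = snd P"
definition Zc :: "cpoint \<Rightarrow> complex" where "Zc P = Xc P + \<i> * Yc P"
definition Ztc :: "cpoint \<Rightarrow> complex" where "Ztc P = Xc P - \<i> * Yc P"

definition upper_half :: "complex set" where "upper_half = {z. Im z > 0}"

definition cosh_dist :: "complex \<Rightarrow> cpoint \<Rightarrow> complex" where
  "cosh_dist z P = 1 + ((of_real (Re z) - Xc P)^2 + (of_real (Im z) - Yc P)^2)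
                       / (2 * of_real (Im z) * Yc P)"

definition c_eta :: "real \<Rightarrow> real" where "c_eta \<eta> = 4 / (4 * \<eta> - \<eta>^3)"

definition K_eta :: "real \<Rightarrow> complex \<Rightarrow> cpoint \<Rightarrow> complex" where
  "K_eta \<eta> z P = (z - Ztc P) / (cnj z - Zc P) * exp (- of_real (c_eta \<eta>) * cosh_dist z P)"

text \<open>Unit-speed right horocycle through z = x+iy with initial velocity
  y(cos th d_x + sin th d_y), i.e. the image of s |-> -s + i under the orientation-preserving
  isometry w |-> x + y k(w), k the rotation about i with k'(i) = -e^{i th}.
  Explicitly, for real s,
    X = x + y (s^2 sin th / 2 + s cos th) / D(s),  Y = y / D(s),
    D(s) = 1 - s sin th + s^2 (1 + cos th)/2.
  These are rational in s with no poles for |Im s| < 1, so the same formula gives the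
  holomorphic continuation to complex s with |Im s| < 1.\<close>
definition horo_D :: "complex \<Rightarrow> real \<Rightarrow> complex" where
  "horo_D s \<theta> = 1 - s * of_real (sin \<theta>) + s^2 * of_real ((1 + cos \<theta>) / 2)"

definition horo :: "complex \<Rightarrow> complex \<Rightarrow> real \<Rightarrow> cpoint" where
  "horo s z \<theta> =
     (of_real (Re z) + of_real (Im z) * (s^2 * of_real (sin \<theta> / 2) + s * of_real (cos \<theta>)) / horo_D s \<theta>,
      of_real (Im z) / horo_D s \<theta>)"

definition Sigma_set :: "real \<Rightarrow> real \<Rightarrow> cpoint set" where
  "Sigma_set t \<theta> = (\<lambda>z. horo (- \<i> * of_real t) z \<theta>) ` upper_half"

end

theory Submission
  imports Defs
begin

(* Write a point of Sigma_{t,theta} as h_{-it}(w, theta) and let (xi, zeta) be w - Re z rotated by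
   -theta/2 (rot_coord).  Then |K_eta(z, h_{-it}(w, theta))| = kappa * exp (Phi(e, e')), where
   kappa > 0 depends only on t and theta (kernel_scale), Phi is kernel_log, and
     e = (xi^2 + cos^2(theta/2) (Im z)^2) / (2 Im w Im z),  e' = (zeta^2 + sin^2(theta/2) (Im z)^2) / (2 Im w Im z)
   satisfy 4 e e' >= 1 by the Brahmagupta-Fibonacci identity.  For C = c_eta > t, scaling (e, e')
   down onto the hyperbola 4 e e' = 1 strictly increases Phi; on the hyperbola Phi restricts to a
   function of e (kernel_log_hyp) whose derivative has the sign of a strictly decreasing function,
   so it has a unique maximiser.  A point (e, 1/(4e)) of the hyperbola determines w, which gives
   uniqueness.  Since c_eta > 1 on (0, 1), the conclusion holds for every eta in (0, 1). *)

definition kernel_log :: "real \<Rightarrow> real \<Rightarrow> real \<Rightarrow> real \<Rightarrow> real" where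
  "kernel_log t C e e' =
     (ln ((1-t)^2*e + e' + (1-t)) - ln ((1+t)^2*e + e' + (1+t))) / 2 - C*((1-t)*(1+t)*e + e')"

definition kernel_log_hyp :: "real \<Rightarrow> real \<Rightarrow> real \<Rightarrow> real" where
  "kernel_log_hyp t C E =
     ln (1 + 2*(1-t)*E) - ln (1 + 2*(1+t)*E) - C*((1-t)*(1+t)*E + 1/(4*E))"

definition kernel_log_hyp_numer :: "real \<Rightarrow> real \<Rightarrow> real \<Rightarrow> real" where
  "kernel_log_hyp_numer t C E =
     C*(1 - 4*(1-t)*(1+t)*E^2) - 16*t*E^2 / ((1 + 2*(1-t)*E)*(1 + 2*(1+t)*E))"

lemma kernel_log_on_hyperbola:
  assumes "0 < t" "t < 1" "0 < E"
  shows "kernel_log t C E (1/(4*E)) = kernel_log_hyp t C E"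
proof -
  have "ln (k^2*E + 1/(4*E) + k) = 2 * ln (1 + 2*k*E) - ln (4*E)" if "0 \<le> k" for k :: real
  proof -
    have pos: "0 < 1 + 2*k*E" using that assms by (simp add: add_pos_nonneg)
    have "k^2*E + 1/(4*E) + k = (1 + 2*k*E)^2 / (4*E)"
      using assms by (simp add: field_simps power2_eq_square)
    then show ?thesis using pos assms by (simp add: ln_div ln_realpow)
  qed
  from this[of "1-t"] this[of "1+t"] show ?thesis
    using assms unfolding kernel_log_def kernel_log_hyp_def by simp
qed

lemma kernel_log_hyp_has_derivative:
  assumes "0 < t" "t < 1" "0 < E"
  shows "(kernel_log_hyp t C has_real_derivative kernel_log_hyp_numer t C E / (4*E^2)) (at E)"
proof -
  have pos: "0 < 1 + 2*(1-t)*E" "0 < 1 + 2*(1+t)*E" using assms by (simp_all add: add_pos_nonneg)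
  have "(kernel_log_hyp t C has_real_derivative
          2*(1-t)/(1 + 2*(1-t)*E) - 2*(1+t)/(1 + 2*(1+t)*E) - C*((1-t)*(1+t) - 4/(4*E)^2)) (at E)"
    unfolding kernel_log_hyp_def using pos assms
    by (auto intro!: derivative_eq_intros simp: power2_eq_square)
  moreover have "2*(1-t)/(1 + 2*(1-t)*E) - 2*(1+t)/(1 + 2*(1+t)*E) - C*((1-t)*(1+t) - 4/(4*E)^2)
      = kernel_log_hyp_numer t C E / (4*E^2)"
    unfolding kernel_log_hyp_numer_def using pos assms by (simp add: field_simps power2_eq_square)
  ultimately show ?thesis by simp
qed

lemma kernel_log_hyp_numer_strict_antimono:
  assumes "0 < t" "t < 1" "0 < C" "0 \<le> x" "x < y"
  shows "kernel_log_hyp_numer t C y < kernel_log_hyp_numer t C x"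
proof -
  define k where "k = (1-t)*(1+t)"
  have k: "0 < k" using assms unfolding k_def by simp
  have numer_eq: "kernel_log_hyp_numer t C E = C*(1 - 4*k*E^2) - 16*t*(E^2 / (1 + 4*E + 4*k*E^2))" for E
    unfolding kernel_log_hyp_numer_def k_def by (simp add: algebra_simps power2_eq_square)
  have "C*(1 - 4*k*y^2) \<le> C*(1 - 4*k*x^2)"
    using assms k by (intro mult_left_mono) (auto intro!: mult_left_mono power_mono)
  moreover have "x^2 / (1 + 4*x + 4*k*x^2) < y^2 / (1 + 4*y + 4*k*y^2)"
  proof -
    have "x^2 < y^2" using assms by (simp add: power_strict_mono)
    moreover have "x^2*y \<le> y^2*x"
      using assms mult_right_mono[of x y "x*y"] by (simp add: power2_eq_square mult_ac)
    ultimately have "x^2*(1 + 4*y + 4*k*y^2) < y^2*(1 + 4*x + 4*k*x^2)" by (simp add: algebra_simps)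
    moreover have "0 < 1 + 4*x + 4*k*x^2" "0 < 1 + 4*y + 4*k*y^2"
      using assms k by (simp_all add: add_pos_nonneg)
    ultimately show ?thesis by (simp add: divide_simps)
  qed
  then have "16*t*(x^2 / (1 + 4*x + 4*k*x^2)) < 16*t*(y^2 / (1 + 4*y + 4*k*y^2))"
    by (rule mult_strict_left_mono) (use assms in simp)
  ultimately show ?thesis unfolding numer_eq by linarith
qed

lemma strict_max_of_deriv_sign_change:
  fixes f f' :: "real \<Rightarrow> real"
  assumes deriv: "\<And>x. a < x \<Longrightarrow> (f has_real_derivative f' x) (at x)"
    and pos: "\<And>x. a < x \<Longrightarrow> x < m \<Longrightarrow> 0 < f' x"
    and neg: "\<And>x. m < x \<Longrightarrow> f' x < 0"
    and "a < m" "a < x" "x \<noteq> m"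
  shows "f x < f m"
proof -
  have cont: "continuous_on {u..v} f" if "a < u" for u v
    using deriv that by (intro continuous_at_imp_continuous_on ballI)
      (meson DERIV_isCont atLeastAtMost_iff less_le_trans)
  show ?thesis
  proof (cases "x < m")
    case True
    show ?thesis
    proof (rule DERIV_pos_imp_increasing_open[OF True _ cont])
      fix y assume "x < y" "y < m"
      with \<open>a < x\<close> show "\<exists>d. (f has_real_derivative d) (at y) \<and> 0 < d"
        by (intro exI[of _ "f' y"]) (simp add: deriv pos)
    qed (use \<open>a < x\<close> in simp)
  next
    case False
    with \<open>x \<noteq> m\<close> have "m < x" by simp
    show ?thesis
    proof (rule DERIV_neg_imp_decreasing_open[OF \<open>m < x\<close> _ cont])
      fix y assume "m < y" "y < x"
      with \<open>a < m\<close> show "\<exists>d. (f has_real_derivative d) (at y) \<and> d < 0"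
        by (intro exI[of _ "f' y"]) (simp add: deriv neg)
    qed (use \<open>a < m\<close> in simp)
  qed
qed

lemma kernel_log_hyp_numer_pos_root:
  assumes "0 < t" "t < 1" "0 < C"
  obtains m where "0 < m" "kernel_log_hyp_numer t C m = 0"
proof -
  define b where "b = 1/(1-t)"
  have "0 < b" "(1-t)*b = 1" using assms unfolding b_def by simp_all
  have "1 < 4*(1+t)*b" using assms unfolding b_def by (simp add: field_simps)
  also have "\<dots> = 4*(1+t)*b*((1-t)*b)" by (simp only: \<open>(1-t)*b = 1\<close> mult_1_right)
  also have "\<dots> = 4*(1-t)*(1+t)*b^2" by (simp add: power2_eq_square algebra_simps)
  finally have "C*(1 - 4*(1-t)*(1+t)*b^2) < 0" using assms by (simp add: mult_pos_neg)
  moreover have "0 \<le> 16*t*b^2 / ((1 + 2*(1-t)*b)*(1 + 2*(1+t)*b))"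
    using assms \<open>0 < b\<close> by (simp add: add_pos_nonneg)
  ultimately have numer_b: "kernel_log_hyp_numer t C b < 0"
    unfolding kernel_log_hyp_numer_def by linarith
  have numer_0: "kernel_log_hyp_numer t C 0 = C" unfolding kernel_log_hyp_numer_def by simp
  have "(1 + 2*(1-t)*x)*(1 + 2*(1+t)*x) \<noteq> 0" if "0 \<le> x" for x
  proof -
    have "0 < 1 + 2*(1-t)*x" "0 < 1 + 2*(1+t)*x" using that assms by (auto intro!: add_pos_nonneg)
    then show ?thesis by simp
  qed
  then have "continuous_on {0..b} (kernel_log_hyp_numer t C)"
    unfolding kernel_log_hyp_numer_def by (intro continuous_intros) auto
  with numer_b numer_0 assms \<open>0 < b\<close> obtain m where "0 \<le> m" "kernel_log_hyp_numer t C m = 0"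
    using IVT2'[of "kernel_log_hyp_numer t C" b 0 0] by auto
  moreover from this numer_0 assms have "m \<noteq> 0" by auto
  ultimately show thesis by (intro that) auto
qed

lemma kernel_log_hyp_strict_max:
  assumes "0 < t" "t < 1" "0 < C"
  obtains m where "0 < m" "\<And>E. 0 < E \<Longrightarrow> E \<noteq> m \<Longrightarrow> kernel_log_hyp t C E < kernel_log_hyp t C m"
proof -
  obtain m where m: "0 < m" "kernel_log_hyp_numer t C m = 0"
    using kernel_log_hyp_numer_pos_root[OF assms] .
  show thesis
  proof (rule that[OF \<open>0 < m\<close>])
    fix E :: real assume "0 < E" "E \<noteq> m"
    show "kernel_log_hyp t C E < kernel_log_hyp t C m"
    proof (rule strict_max_of_deriv_sign_change
        [where a = 0 and f = "kernel_log_hyp t C" and f' = "\<lambda>x. kernel_log_hyp_numer t C x / (4*x^2)"])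
      fix x :: real
      show "0 < x \<Longrightarrow> (kernel_log_hyp t C has_real_derivative kernel_log_hyp_numer t C x / (4*x^2)) (at x)"
        using kernel_log_hyp_has_derivative assms by blast
      show "0 < x \<Longrightarrow> x < m \<Longrightarrow> 0 < kernel_log_hyp_numer t C x / (4*x^2)"
        using kernel_log_hyp_numer_strict_antimono[of t C x m] assms m by simp
      show "m < x \<Longrightarrow> kernel_log_hyp_numer t C x / (4*x^2) < 0"
        using kernel_log_hyp_numer_strict_antimono[of t C m x] assms m by (simp add: divide_neg_pos)
    qed (use \<open>0 < m\<close> \<open>0 < E\<close> \<open>E \<noteq> m\<close> in auto)
  qed
qed

lemma kernel_log_args_prod_gt_one:
  fixes t E E' :: real
  assumes "0 < t" "t < 1" "0 < E" "0 < E'" "4*E*E' = 1"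
  shows "1 < ((1-t)^2*E + E' + (1-t)) * ((1+t)^2*E + E' + (1+t))"
proof -
  define a b where "a = 1 - t" and "b = 1 + t"
  have ab: "0 < a" "0 < b" using assms unfolding a_def b_def by simp_all
  define R where "R = a^2*b^2*E^2 + a^2*b*E + a*b^2*E + E'^2 + b*E' + a*E'"
  have "0 \<le> R" unfolding R_def using ab assms by simp
  have "(a^2*E + E' + a) * (b^2*E + E' + b) = R + ((a^2 + b^2)*(E*E') + a*b)"
    unfolding R_def by (simp add: algebra_simps power2_eq_square)
  also have "(a^2 + b^2)*(E*E') + a*b = 3/2 - t^2/2"
    using assms(5) unfolding a_def b_def by (simp add: algebra_simps power2_eq_square)
  moreover have "t^2 < 1" using assms by (simp add: abs_square_less_1)
  ultimately show ?thesis using \<open>0 \<le> R\<close> unfolding a_def b_def by linarith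
qed

lemma ln_cross_ratio_le:
  fixes a b c d :: real
  assumes "0 < a" "0 < b" "0 < c" "0 < d"
  shows "ln a - ln b - (ln c - ln d) \<le> (a*d - b*c) / (b*c)"
proof -
  have "ln a - ln b - (ln c - ln d) = ln ((a*d) / (b*c))"
    using assms by (simp add: ln_div ln_mult)
  also have "\<dots> \<le> (a*d) / (b*c) - 1" using assms by (intro ln_le_minus_one) simp
  also have "\<dots> = (a*d - b*c) / (b*c)" using assms by (simp add: field_simps)
  finally show ?thesis .
qed

lemma kernel_log_le_scaled:
  fixes t C e e' l :: real
  assumes "0 < t" "t < 1" "0 < e" "0 < e'" "0 < l" "l \<le> 1" "4*(l*e)*(l*e') = 1"
  shows "kernel_log t C e e' \<le> kernel_log t C (l*e) (l*e') + (1-l)*(t - C)*((1-t)*(1+t)*e + e')"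
proof -
  define a b where "a = 1 - t" and "b = 1 + t"
  have ab: "0 < a" "0 < b" using assms unfolding a_def b_def by simp_all
  define h where "h = a*b*e + e'"
  define n1 n2 where "n1 = a^2*e + e' + a" and "n2 = b^2*e + e' + b"
  define m1 m2 where "m1 = a^2*(l*e) + l*e' + a" and "m2 = b^2*(l*e) + l*e' + b"
  have pos: "0 < n1" "0 < n2" "0 < m1" "0 < m2" "0 < h"
    unfolding n1_def n2_def m1_def m2_def h_def using ab assms by (simp_all add: add_pos_pos)
  have "1 < m1 * m2"
    using kernel_log_args_prod_gt_one[of t "l*e" "l*e'"] assms unfolding m1_def m2_def a_def b_def by simp
  moreover have "m2 \<le> n2"
    unfolding n2_def m2_def using assms ab by (auto intro!: add_mono mult_left_mono simp: mult_le_cancel_right1)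
  moreover have "m1 * m2 \<le> m1 * n2" using \<open>m2 \<le> n2\<close> pos by simp
  ultimately have m1n2: "1 \<le> m1 * n2" by linarith
  have "n1*m2 - m1*n2 = (1-l)*(2*t*(e' - a*b*e))"
    unfolding n1_def n2_def m1_def m2_def a_def b_def by (simp add: algebra_simps power2_eq_square)
  also have "\<dots> \<le> (1-l)*(2*t*h)"
    unfolding h_def using assms ab by (intro mult_left_mono) auto
  finally have num: "n1*m2 - m1*n2 \<le> (1-l)*(2*t*h)" .
  have "ln n1 - ln m1 - (ln n2 - ln m2) \<le> (n1*m2 - m1*n2)/(m1*n2)"
    using ln_cross_ratio_le[OF pos(1,3,2,4)] .
  also have "\<dots> \<le> (1-l)*(2*t*h)/(m1*n2)" using num pos by (intro divide_right_mono) auto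
  also have "\<dots> \<le> (1-l)*(2*t*h)"
  proof (rule mult_imp_div_pos_le)
    show "0 < m1*n2" using pos by simp
    show "(1-l)*(2*t*h) \<le> (1-l)*(2*t*h)*(m1*n2)"
      using mult_left_mono[OF m1n2, of "(1-l)*(2*t*h)"] pos assms by simp
  qed
  finally have "ln n1 - ln m1 - (ln n2 - ln m2) \<le> (1-l)*(2*t*h)" .
  moreover have "kernel_log t C e e' = (ln n1 - ln n2)/2 - C*h"
    unfolding kernel_log_def n1_def n2_def h_def a_def b_def by simp
  moreover have "kernel_log t C (l*e) (l*e') = (ln m1 - ln m2)/2 - C*(l*h)"
    unfolding kernel_log_def m1_def m2_def h_def a_def b_def by (simp add: algebra_simps)
  ultimately have "kernel_log t C e e' \<le> kernel_log t C (l*e) (l*e') + ((1-l)*(2*t*h)/2 - C*h + C*(l*h))"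
    by argo
  also have "(1-l)*(2*t*h)/2 - C*h + C*(l*h) = (1-l)*(t - C)*h" by (simp add: field_simps)
  finally show ?thesis unfolding h_def a_def b_def .
qed

lemma kernel_log_lt_hyp_max:
  fixes t C m e e' :: real
  assumes "0 < t" "t < 1" "t < C" "0 < m"
    and max: "\<And>E. 0 < E \<Longrightarrow> E \<noteq> m \<Longrightarrow> kernel_log_hyp t C E < kernel_log_hyp t C m"
    and "0 < e" "0 < e'" "1 \<le> 4*e*e'" "\<not> (4*e*e' = 1 \<and> e = m)"
  shows "kernel_log t C e e' < kernel_log_hyp t C m"
proof (cases "4*e*e' = 1")
  case True
  then have "e' = 1/(4*e)" "e \<noteq> m" using assms by (auto simp: field_simps)
  then show ?thesis using kernel_log_on_hyperbola max assms by simp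
next
  case False
  define r :: real where "r = 1/(2 * sqrt (e*e'))"
  have "1 < 2 * sqrt (e*e')"
    using False assms real_less_rsqrt[of 1 "4*e*e'"] by (simp add: real_sqrt_mult)
  then have r: "0 < r" "r < 1" unfolding r_def using assms by (simp_all add: divide_less_eq)
  have hyp: "4*(r*e)*(r*e') = 1" unfolding r_def using assms by (simp add: field_simps)
  then have "r*e' = 1/(4*(r*e))" using r assms by (simp add: field_simps)
  then have "kernel_log t C (r*e) (r*e') = kernel_log_hyp t C (r*e)"
    using kernel_log_on_hyperbola r assms by simp
  also have "\<dots> \<le> kernel_log_hyp t C m"
  proof (cases "r*e = m")
    case False
    then show ?thesis using r assms by (intro less_imp_le max) simp_all
  qed simp
  finally have "kernel_log t C (r*e) (r*e') \<le> kernel_log_hyp t C m" .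
  moreover have "(1-r)*(t - C)*((1-t)*(1+t)*e + e') < 0"
  proof (rule mult_neg_pos)
    show "(1-r)*(t - C) < 0" using r assms by (simp add: mult_pos_neg)
    show "0 < (1-t)*(1+t)*e + e'" using assms by (simp add: add_pos_pos)
  qed
  moreover have "kernel_log t C e e' \<le> kernel_log t C (r*e) (r*e') + (1-r)*(t - C)*((1-t)*(1+t)*e + e')"
    using kernel_log_le_scaled[OF assms(1,2,6,7) r(1) _ hyp] r by simp
  ultimately show ?thesis by linarith
qed

lemma cos_sin_sq_comb_pos:
  fixes a b x :: real
  assumes "0 < a" "0 < b"
  shows "0 < a * (cos x)^2 + b * (sin x)^2"
proof -
  have "min a b * (cos x)^2 \<le> a * (cos x)^2" "min a b * (sin x)^2 \<le> b * (sin x)^2"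
    by (simp_all add: mult_right_mono)
  moreover have "min a b = min a b * (cos x)^2 + min a b * (sin x)^2"
    by (simp flip: distrib_left)
  ultimately show ?thesis using assms by linarith
qed

definition rot_coord :: "real \<Rightarrow> complex \<Rightarrow> complex \<Rightarrow> complex" where
  "rot_coord \<theta> z w = (w - of_real (Re z)) * cis (- \<theta>/2)"

lemma Re_rot_coord [simp]: "Re (rot_coord \<theta> z w) = (Re w - Re z) * cos (\<theta>/2) + Im w * sin (\<theta>/2)"
  by (simp add: rot_coord_def)

lemma Im_rot_coord [simp]: "Im (rot_coord \<theta> z w) = Im w * cos (\<theta>/2) - (Re w - Re z) * sin (\<theta>/2)"
  by (simp add: rot_coord_def)

lemma rot_coord_eq_iff: "rot_coord \<theta> z w = \<rho> \<longleftrightarrow> w = of_real (Re z) + \<rho> * cis (\<theta>/2)"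
proof -
  have "cis (- \<theta>/2) * cis (\<theta>/2) = 1" by (simp add: cis_mult)
  then show ?thesis unfolding rot_coord_def
    by (metis (no_types, lifting) add_diff_cancel_left' cis_neq_zero diff_add_cancel
        mult.assoc mult.right_neutral nonzero_mult_div_cancel_right)
qed

lemma Im_eq_rot_coord:
  "Im w = sin (\<theta>/2) * Re (rot_coord \<theta> z w) + cos (\<theta>/2) * Im (rot_coord \<theta> z w)"
proof -
  have "(sin (\<theta>/2))^2 + (cos (\<theta>/2))^2 = 1" by (rule sin_cos_squared_add)
  then show ?thesis unfolding Re_rot_coord Im_rot_coord by algebra
qed

definition horo_e :: "real \<Rightarrow> complex \<Rightarrow> complex \<Rightarrow> real" where
  "horo_e \<theta> z w = ((Re (rot_coord \<theta> z w))^2 + (cos (\<theta>/2))^2 * (Im z)^2) / (2 * Im w * Im z)"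

definition horo_e' :: "real \<Rightarrow> complex \<Rightarrow> complex \<Rightarrow> real" where
  "horo_e' \<theta> z w = ((Im (rot_coord \<theta> z w))^2 + (sin (\<theta>/2))^2 * (Im z)^2) / (2 * Im w * Im z)"

lemma four_horo_e_mult:
  assumes "0 < Im z" "0 < Im w"
  shows "4 * horo_e \<theta> z w * horo_e' \<theta> z w =
    1 + ((Re (rot_coord \<theta> z w) * Im (rot_coord \<theta> z w) - cos (\<theta>/2) * sin (\<theta>/2) * (Im z)^2)
          / (Im w * Im z))^2"
proof -
  define \<xi> \<zeta> where "\<xi> = Re (rot_coord \<theta> z w)" and "\<zeta> = Im (rot_coord \<theta> z w)"
  define c s where "c = cos (\<theta>/2)" and "s = sin (\<theta>/2)"
  have "Im w = s*\<xi> + c*\<zeta>" unfolding \<xi>_def \<zeta>_def c_def s_def by (rule Im_eq_rot_coord)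
  \<comment> \<open>Brahmagupta-Fibonacci identity\<close>
  then have "(\<xi>^2 + c^2*(Im z)^2) * (\<zeta>^2 + s^2*(Im z)^2) = (Im w * Im z)^2 + (\<xi>*\<zeta> - c * s*(Im z)^2)^2"
    by algebra
  moreover have "4 * horo_e \<theta> z w * horo_e' \<theta> z w
      = (\<xi>^2 + c^2*(Im z)^2) * (\<zeta>^2 + s^2*(Im z)^2) / (Im w * Im z)^2"
    using assms unfolding horo_e_def horo_e'_def \<xi>_def[symmetric] \<zeta>_def[symmetric] c_def[symmetric] s_def[symmetric]
    by (simp add: field_simps power2_eq_square)
  ultimately show ?thesis
    using assms unfolding \<xi>_def[symmetric] \<zeta>_def[symmetric] c_def[symmetric] s_def[symmetric]
    by (simp add: add_divide_distrib power_divide)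
qed

lemma horo_e_pos:
  assumes "0 < Im z" "0 < Im w"
  shows "0 < horo_e \<theta> z w" "0 < horo_e' \<theta> z w"
proof -
  have "0 \<le> horo_e \<theta> z w" "0 \<le> horo_e' \<theta> z w"
    using assms unfolding horo_e_def horo_e'_def by simp_all
  moreover have "0 < 4 * horo_e \<theta> z w * horo_e' \<theta> z w"
    using four_horo_e_mult[OF assms] by (simp add: add_pos_nonneg)
  ultimately show "0 < horo_e \<theta> z w" "0 < horo_e' \<theta> z w"
    by (auto simp: zero_less_mult_iff)
qed

definition horo_e_point :: "real \<Rightarrow> complex \<Rightarrow> real \<Rightarrow> complex" where
  "horo_e_point \<theta> z E =
     of_real (Re z) + Complex (2*E * sin (\<theta>/2)*Im z) (cos (\<theta>/2)*Im z/(2*E)) * cis (\<theta>/2)"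

lemma horo_e_point:
  assumes "0 < Im z" "0 < E"
  shows "0 < Im (horo_e_point \<theta> z E)" "horo_e \<theta> z (horo_e_point \<theta> z E) = E"
    "horo_e' \<theta> z (horo_e_point \<theta> z E) = 1/(4*E)"
proof -
  define w where "w = horo_e_point \<theta> z E"
  define c s where "c = cos (\<theta>/2)" and "s = sin (\<theta>/2)"
  have rot: "rot_coord \<theta> z w = Complex (2*E * s * Im z) (c*Im z/(2*E))"
    unfolding w_def horo_e_point_def rot_coord_eq_iff c_def s_def ..
  define K where "K = c^2 + 4*E^2 * s^2"
  have "0 < K" unfolding K_def c_def s_def using assms cos_sin_sq_comb_pos[of 1 "4*E^2"] by simp
  have "Im w = s * (2*E * s * Im z) + c * (c*Im z/(2*E))"
    using Im_eq_rot_coord[of w \<theta> z] unfolding rot c_def s_def by simp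
  also have "\<dots> = K * Im z / (2*E)" unfolding K_def using assms by (simp add: field_simps power2_eq_square)
  finally have Im_w: "Im w = K * Im z / (2*E)" .
  then show "0 < Im (horo_e_point \<theta> z E)" using assms \<open>0 < K\<close> unfolding w_def by simp
  have den: "2 * Im w * Im z = K * (Im z)^2 / E"
    unfolding Im_w using assms by (simp add: field_simps power2_eq_square)
  have "(2*E * s * Im z)^2 + c^2*(Im z)^2 = K * (Im z)^2"
    unfolding K_def by (simp add: power2_eq_square algebra_simps)
  then show "horo_e \<theta> z (horo_e_point \<theta> z E) = E"
    using assms \<open>0 < K\<close> unfolding w_def[symmetric] horo_e_def rot den c_def[symmetric] by simp
  have "(c*Im z/(2*E))^2 + s^2*(Im z)^2 = K * (Im z)^2 / (4*E^2)"
    unfolding K_def using assms by (simp add: power2_eq_square field_simps)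
  then show "horo_e' \<theta> z (horo_e_point \<theta> z E) = 1/(4*E)"
    using assms \<open>0 < K\<close> unfolding w_def[symmetric] horo_e'_def rot den s_def[symmetric]
    by (simp add: power2_eq_square)
qed

lemma eq_horo_e_pointI:
  assumes "0 < Im z" "0 < Im w" "0 < E" "horo_e \<theta> z w = E" "horo_e' \<theta> z w = 1/(4*E)"
  shows "w = horo_e_point \<theta> z E"
proof -
  define \<xi> \<zeta> where "\<xi> = Re (rot_coord \<theta> z w)" and "\<zeta> = Im (rot_coord \<theta> z w)"
  define c s where "c = cos (\<theta>/2)" and "s = sin (\<theta>/2)"
  define y y0 where "y = Im w" and "y0 = Im z"
  have F: "\<xi>^2 + c^2*y0^2 = 2*E*y*y0" "4*E*(\<zeta>^2 + s^2*y0^2) = 2*y*y0"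
    using assms unfolding horo_e_def horo_e'_def \<xi>_def \<zeta>_def c_def s_def y_def y0_def
    by (simp_all add: field_simps)
  have "y = s*\<xi> + c*\<zeta>" unfolding \<xi>_def \<zeta>_def c_def s_def y_def by (rule Im_eq_rot_coord)
  then have "(\<xi> - 2*E * s*y0)^2 + (c*y0 - 2*E*\<zeta>)^2
      = (\<xi>^2 + c^2*y0^2) - 4*E*y*y0 + E*(4*E*(\<zeta>^2 + s^2*y0^2))"
    by (simp add: power2_eq_square algebra_simps)
  also have "\<dots> = 0" unfolding F by (simp add: algebra_simps)
  finally have "\<xi> = 2*E * s*y0" "\<zeta> = c*y0/(2*E)"
    using assms by (simp_all add: sum_power2_eq_zero_iff field_simps)
  then have "rot_coord \<theta> z w = Complex (2*E * s*y0) (c*y0/(2*E))"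
    unfolding \<xi>_def \<zeta>_def by (simp add: complex_eq_iff)
  then show ?thesis unfolding rot_coord_eq_iff horo_e_point_def c_def s_def y0_def .
qed

lemma horo_D_cnj: "horo_D (cnj s) \<theta> = cnj (horo_D s \<theta>)"
  by (simp add: horo_D_def)

lemma Ztc_horo_cnj: "Ztc (horo (cnj s) w \<theta>) = cnj (Zc (horo s w \<theta>))"
  by (simp add: Ztc_def Zc_def Xc_def Yc_def horo_def horo_D_cnj)

lemma horo_D_imag:
  "horo_D (- \<i> * of_real t) \<theta> = Complex (1 - t^2 * (cos (\<theta>/2))^2) (2 * t * sin (\<theta>/2) * cos (\<theta>/2))"
proof -
  have "(1 + cos \<theta>)/2 = (cos (\<theta>/2))^2" "sin \<theta> = 2 * sin (\<theta>/2) * cos (\<theta>/2)"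
    using cos_double_cos[of "\<theta>/2"] sin_double[of "\<theta>/2"] by simp_all
  then show ?thesis by (simp add: horo_D_def complex_eq_iff power2_eq_square)
qed

lemma horo_D_imag_nonzero:
  assumes "\<bar>t\<bar> < 1"
  shows "horo_D (- \<i> * of_real t) \<theta> \<noteq> 0"
proof -
  have "(cos (\<theta>/2))^2 \<le> 1" by (simp add: abs_square_le_1)
  then have "t^2 * (cos (\<theta>/2))^2 \<le> t^2" by (simp add: mult_left_le)
  also have "\<dots> < 1" using assms by (simp add: abs_square_less_1)
  finally show ?thesis unfolding horo_D_imag by (simp add: complex_eq_iff)
qed

lemma horo_imag_coords:
  fixes t \<theta> :: real
  assumes "\<bar>t\<bar> < 1"
  defines "D \<equiv> horo_D (- \<i> * of_real t) \<theta>"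
    and "A \<equiv> Complex (- (t^2 * sin (\<theta>/2) * cos (\<theta>/2))) (- (t * ((cos (\<theta>/2))^2 - (sin (\<theta>/2))^2)))"
  shows "Xc (horo (- \<i> * of_real t) w \<theta>) * D = of_real (Re w) * D + of_real (Im w) * A"
    and "Yc (horo (- \<i> * of_real t) w \<theta>) * D = of_real (Im w)"
proof -
  have "cos \<theta> = (cos (\<theta>/2))^2 - (sin (\<theta>/2))^2" "sin \<theta> = 2 * sin (\<theta>/2) * cos (\<theta>/2)"
    using cos_double[of "\<theta>/2"] sin_double[of "\<theta>/2"] by simp_all
  then have "(- \<i> * of_real t)^2 * of_real (sin \<theta> / 2) + (- \<i> * of_real t) * of_real (cos \<theta>) = A"
    unfolding A_def by (simp add: complex_eq_iff power2_eq_square)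
  moreover have "D \<noteq> 0" unfolding D_def using assms(1) by (rule horo_D_imag_nonzero)
  ultimately show "Xc (horo (- \<i> * of_real t) w \<theta>) * D = of_real (Re w) * D + of_real (Im w) * A"
    and "Yc (horo (- \<i> * of_real t) w \<theta>) * D = of_real (Im w)"
    unfolding Xc_def Yc_def horo_def D_def[symmetric] by (simp_all add: field_simps)
qed

lemma norm_z_minus_Ztc_horo_sq:
  assumes "\<bar>t\<bar> < 1" "0 < Im z" "0 < Im w"
  shows "(norm ((z - Ztc (horo (- \<i> * of_real t) w \<theta>)) * horo_D (- \<i> * of_real t) \<theta>))^2
    = ((1+t)^2 * (cos (\<theta>/2))^2 + (sin (\<theta>/2))^2) * (2 * Im w * Im z)
      * ((1-t)^2 * horo_e \<theta> z w + horo_e' \<theta> z w + (1-t))"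
proof -
  define x y x0 y0 where "x = Re w" and "y = Im w" and "x0 = Re z" and "y0 = Im z"
  define c s where "c = cos (\<theta>/2)" and "s = sin (\<theta>/2)"
  define \<xi> \<zeta> where "\<xi> = Re (rot_coord \<theta> z w)" and "\<zeta> = Im (rot_coord \<theta> z w)"
  define D where "D = horo_D (- \<i> * of_real t) \<theta>"
  define A where "A = Complex (- (t^2 * s * c)) (- (t * (c^2 - s^2)))"
  have cs: "c^2 + s^2 = 1" unfolding c_def s_def by simp
  have D: "D = Complex (1 - t^2 * c^2) (2 * t * s * c)"
    unfolding D_def c_def s_def horo_D_imag by (simp add: mult_ac)
  define N where "N = (z - of_real x) * D - of_real y * A + \<i> * of_real y"
  have eq: "(z - Ztc (horo (- \<i> * of_real t) w \<theta>)) * D = N"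
    using horo_imag_coords[OF assms(1), of w \<theta>] unfolding N_def Ztc_def D_def A_def x_def y_def c_def s_def
    by (simp add: algebra_simps mult_ac)
  have norm_N: "(norm N)^2 = ((1+t)^2 * c^2 + s^2)
      * ((1-t)^2 * (\<xi>^2 + c^2 * y0^2) + (\<zeta>^2 + s^2 * y0^2) + 2 * (1-t) * y * y0)"
  proof -
    have "Re N = (1 - t^2 * c^2) * (x0 - x) - 2 * t * s * c * y0 + t^2 * s * c * y"
      "Im N = (1 - t^2 * c^2) * y0 + 2 * t * s * c * (x0 - x) + y * (1 + t * (c^2 - s^2))"
      unfolding N_def D A_def x0_def y0_def by (simp_all add: algebra_simps)
    moreover have "\<xi> = (x - x0) * c + y * s" "\<zeta> = y * c - (x - x0) * s"
      unfolding \<xi>_def \<zeta>_def x_def y_def x0_def y0_def c_def s_def by simp_all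
    ultimately show ?thesis unfolding cmod_power2 using cs by algebra
  qed
  have e: "\<xi>^2 + c^2 * y0^2 = 2 * y * y0 * horo_e \<theta> z w" "\<zeta>^2 + s^2 * y0^2 = 2 * y * y0 * horo_e' \<theta> z w"
    using assms unfolding horo_e_def horo_e'_def \<xi>_def \<zeta>_def c_def s_def y_def y0_def by simp_all
  have "(norm N)^2 = ((1+t)^2 * c^2 + s^2)
      * ((1-t)^2 * (2 * y * y0 * horo_e \<theta> z w) + 2 * y * y0 * horo_e' \<theta> z w + 2 * (1-t) * y * y0)"
    using norm_N unfolding e .
  also have "\<dots> = ((1+t)^2 * c^2 + s^2) * (2 * y * y0)
      * ((1-t)^2 * horo_e \<theta> z w + horo_e' \<theta> z w + (1-t))"
    by (simp add: algebra_simps)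
  finally show ?thesis unfolding eq[symmetric] D_def c_def s_def y_def y0_def .
qed

definition kernel_scale :: "real \<Rightarrow> real \<Rightarrow> real" where
  "kernel_scale t \<theta> = sqrt (((1+t)^2 * (cos (\<theta>/2))^2 + (sin (\<theta>/2))^2)
                             / ((1-t)^2 * (cos (\<theta>/2))^2 + (sin (\<theta>/2))^2))"

lemma kernel_scale_pos:
  assumes "0 < t" "t < 1"
  shows "0 < kernel_scale t \<theta>"
  using assms cos_sin_sq_comb_pos[of "(1+t)^2" 1] cos_sin_sq_comb_pos[of "(1-t)^2" 1]
  unfolding kernel_scale_def by simp

lemma norm_cross_ratio_horo:
  fixes t \<theta> :: real and z w :: complex
  assumes "0 < t" "t < 1" "0 < Im z" "0 < Im w"
  defines "P \<equiv> horo (- \<i> * of_real t) w \<theta>"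
  shows "norm ((z - Ztc P) / (cnj z - Zc P)) = kernel_scale t \<theta>
   * sqrt (((1-t)^2 * horo_e \<theta> z w + horo_e' \<theta> z w + (1-t))
            / ((1+t)^2 * horo_e \<theta> z w + horo_e' \<theta> z w + (1+t)))"
proof -
  \<comment> \<open>replacing t by -t conjugates the horocycle point, which swaps the two factors\<close>
  define P' where "P' = horo (- \<i> * of_real (- t)) w \<theta>"
  define D D' where "D = horo_D (- \<i> * of_real t) \<theta>" and "D' = horo_D (- \<i> * of_real (- t)) \<theta>"
  have cnj_t: "- \<i> * of_real (- t) = cnj (- \<i> * of_real t)" by simp
  have "cnj z - Zc P = cnj (z - Ztc P')" unfolding P_def P'_def cnj_t Ztc_horo_cnj by simp
  then have "norm (cnj z - Zc P) = norm (z - Ztc P')" by (simp only: complex_mod_cnj)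
  moreover have "norm D' = norm D" unfolding D_def D'_def cnj_t horo_D_cnj by simp
  moreover have "D \<noteq> 0" unfolding D_def using assms by (intro horo_D_imag_nonzero) simp
  ultimately have "norm ((z - Ztc P) / (cnj z - Zc P)) = norm ((z - Ztc P) * D) / norm ((z - Ztc P') * D')"
    by (simp add: norm_divide norm_mult)
  also have "\<dots> = sqrt ((norm ((z - Ztc P) * D))^2) / sqrt ((norm ((z - Ztc P') * D'))^2)" by simp
  also have "\<dots> = sqrt (((1+t)^2 * (cos (\<theta>/2))^2 + (sin (\<theta>/2))^2) * (2 * Im w * Im z)
                      * ((1-t)^2 * horo_e \<theta> z w + horo_e' \<theta> z w + (1-t)))
                / sqrt (((1-t)^2 * (cos (\<theta>/2))^2 + (sin (\<theta>/2))^2) * (2 * Im w * Im z)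
                      * ((1+t)^2 * horo_e \<theta> z w + horo_e' \<theta> z w + (1+t)))"
    using norm_z_minus_Ztc_horo_sq[of t z w \<theta>] norm_z_minus_Ztc_horo_sq[of "-t" z w \<theta>] assms
    unfolding P_def P'_def D_def D'_def by simp
  also have "\<dots> = kernel_scale t \<theta>
   * sqrt (((1-t)^2 * horo_e \<theta> z w + horo_e' \<theta> z w + (1-t))
            / ((1+t)^2 * horo_e \<theta> z w + horo_e' \<theta> z w + (1+t)))"
    using assms unfolding kernel_scale_def by (simp add: real_sqrt_mult real_sqrt_divide)
  finally show ?thesis .
qed

lemma cosh_dist_eq_frac:
  fixes D A E :: complex and x y :: real
  assumes "D \<noteq> 0" "A^2 + 1 = D * E"
    and "Xc P * D = of_real x * D + of_real y * A" "Yc P * D = of_real y"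
  shows "cosh_dist z P = 1 + (D * ((of_real (Re z) - of_real x)^2 + (of_real (Im z))^2)
      - 2 * (of_real (Re z) - of_real x) * of_real y * A - 2 * of_real (Im z) * of_real y + (of_real y)^2 * E)
      / of_real (2 * Im z * y)"
    (is "_ = 1 + ?G / _")
proof -
  have "D * (D * ((of_real (Re z) - Xc P)^2 + (of_real (Im z) - Yc P)^2)) = D * ?G"
    using assms(2-4) by algebra
  then have S: "(of_real (Re z) - Xc P)^2 + (of_real (Im z) - Yc P)^2 = ?G / D"
    using \<open>D \<noteq> 0\<close> by (simp add: eq_divide_eq mult.commute)
  have Y: "Yc P = of_real y / D" using assms(1,4) by (simp add: eq_divide_eq)
  have "cosh_dist z P = 1 + (?G / D) / (2 * of_real (Im z) * (of_real y / D))"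
    unfolding cosh_dist_def S unfolding Y ..
  also have "\<dots> = 1 + ?G / of_real (2 * Im z * y)"
  proof (cases "Im z * y = 0")
    case False
    with \<open>D \<noteq> 0\<close> show ?thesis by (simp add: field_simps)
  qed auto
  finally show ?thesis .
qed

lemma Re_cosh_dist_horo:
  assumes "0 < t" "t < 1" "0 < Im z" "0 < Im w"
  shows "Re (cosh_dist z (horo (- \<i> * of_real t) w \<theta>)) = (1-t)*(1+t) * horo_e \<theta> z w + horo_e' \<theta> z w"
proof -
  define x y x0 y0 where "x = Re w" and "y = Im w" and "x0 = Re z" and "y0 = Im z"
  define c s where "c = cos (\<theta>/2)" and "s = sin (\<theta>/2)"
  define \<xi> \<zeta> where "\<xi> = Re (rot_coord \<theta> z w)" and "\<zeta> = Im (rot_coord \<theta> z w)"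
  define D where "D = horo_D (- \<i> * of_real t) \<theta>"
  define A where "A = Complex (- (t^2 * s * c)) (- (t * (c^2 - s^2)))"
  define E where "E = Complex (1 - t^2 * s^2) (- (2 * t * s * c))"
  have cs: "c^2 + s^2 = 1" unfolding c_def s_def by simp
  have D: "D = Complex (1 - t^2 * c^2) (2 * t * s * c)"
    unfolding D_def c_def s_def horo_D_imag by (simp add: mult_ac)
  have "\<bar>t\<bar> < 1" using assms by simp
  have "A^2 + 1 = D * E"
    using cs unfolding A_def D E_def by (simp add: complex_eq_iff power2_eq_square) algebra
  then have "cosh_dist z (horo (- \<i> * of_real t) w \<theta>) = 1 + (D * ((of_real x0 - of_real x)^2 + (of_real y0)^2)
      - 2 * (of_real x0 - of_real x) * of_real y * A - 2 * of_real y0 * of_real y + (of_real y)^2 * E)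
      / of_real (2 * y0 * y)"
    using horo_imag_coords[OF \<open>\<bar>t\<bar> < 1\<close>, of w \<theta>] horo_D_imag_nonzero[OF \<open>\<bar>t\<bar> < 1\<close>, of \<theta>]
    unfolding x_def y_def x0_def y0_def D_def A_def c_def s_def by (intro cosh_dist_eq_frac) (simp_all add: mult_ac)
  then have "Re (cosh_dist z (horo (- \<i> * of_real t) w \<theta>))
      = 1 + ((1 - t^2 * c^2) * ((x0 - x)^2 + y0^2) + 2 * (x0 - x) * y * (t^2 * s * c)
             - 2 * y0 * y + y^2 * (1 - t^2 * s^2)) / (2 * y0 * y)"
    unfolding D A_def E_def by (simp add: Re_divide_of_real power2_eq_square algebra_simps)
  also have "\<dots> = ((1-t)*(1+t) * (\<xi>^2 + c^2 * y0^2) + (\<zeta>^2 + s^2 * y0^2)) / (2 * y * y0)"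
  proof -
    have "\<xi> = (x - x0) * c + y * s" "\<zeta> = y * c - (x - x0) * s"
      unfolding \<xi>_def \<zeta>_def x_def y_def x0_def y0_def c_def s_def by simp_all
    then have "2 * y * y0 + ((1 - t^2 * c^2) * ((x0 - x)^2 + y0^2) + 2 * (x0 - x) * y * (t^2 * s * c)
             - 2 * y0 * y + y^2 * (1 - t^2 * s^2)) = (1-t)*(1+t) * (\<xi>^2 + c^2 * y0^2) + (\<zeta>^2 + s^2 * y0^2)"
      using cs by algebra
    then show ?thesis using assms unfolding y_def y0_def by (simp add: field_simps)
  qed
  also have "\<dots> = (1-t)*(1+t) * horo_e \<theta> z w + horo_e' \<theta> z w"
    using assms unfolding horo_e_def horo_e'_def \<xi>_def \<zeta>_def c_def s_def y_def y0_def by (simp add: field_simps)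
  finally show ?thesis .
qed

lemma norm_K_eta_horo:
  assumes "0 < t" "t < 1" "0 < Im z" "0 < Im w"
  shows "norm (K_eta \<eta> z (horo (- \<i> * of_real t) w \<theta>))
    = kernel_scale t \<theta> * exp (kernel_log t (c_eta \<eta>) (horo_e \<theta> z w) (horo_e' \<theta> z w))"
proof -
  define P e e' where "P = horo (- \<i> * of_real t) w \<theta>" and "e = horo_e \<theta> z w" and "e' = horo_e' \<theta> z w"
  define n1 n2 where "n1 = (1-t)^2 * e + e' + (1-t)" and "n2 = (1+t)^2 * e + e' + (1+t)"
  have "0 < e" "0 < e'" unfolding e_def e'_def using horo_e_pos assms by blast+
  then have "0 < n1" "0 < n2" unfolding n1_def n2_def using assms by (simp_all add: add_pos_pos)
  then have sqrt_eq: "sqrt (n1 / n2) = exp ((ln n1 - ln n2) / 2)"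
    by (simp add: powr_half_sqrt[symmetric] powr_def ln_div)
  have "norm (K_eta \<eta> z P) = norm ((z - Ztc P) / (cnj z - Zc P)) * exp (- c_eta \<eta> * Re (cosh_dist z P))"
    unfolding K_eta_def norm_mult norm_exp_eq_Re by simp
  also have "\<dots> = kernel_scale t \<theta> * sqrt (n1 / n2) * exp (- c_eta \<eta> * ((1-t)*(1+t) * e + e'))"
    unfolding P_def norm_cross_ratio_horo[OF assms] Re_cosh_dist_horo[OF assms] n1_def n2_def e_def e'_def ..
  also have "\<dots> = kernel_scale t \<theta> * exp (kernel_log t (c_eta \<eta>) e e')"
    unfolding sqrt_eq kernel_log_def n1_def[symmetric] n2_def[symmetric] by (simp add: mult.assoc flip: exp_add)
  finally show ?thesis unfolding P_def e_def e'_def .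
qed

lemma norm_K_eta_horo_lt_max:
  assumes "0 < t" "t < 1" "t < c_eta \<eta>" "0 < Im z" "0 < m"
    and max: "\<And>E. 0 < E \<Longrightarrow> E \<noteq> m \<Longrightarrow> kernel_log_hyp t (c_eta \<eta>) E < kernel_log_hyp t (c_eta \<eta>) m"
    and "0 < Im w" "w \<noteq> horo_e_point \<theta> z m"
  shows "norm (K_eta \<eta> z (horo (- \<i> * of_real t) w \<theta>))
       < norm (K_eta \<eta> z (horo (- \<i> * of_real t) (horo_e_point \<theta> z m) \<theta>))"
proof -
  define e e' where "e = horo_e \<theta> z w" and "e' = horo_e' \<theta> z w"
  have "0 < e" "0 < e'" unfolding e_def e'_def using horo_e_pos assms by blast+
  have prod_ge: "1 \<le> 4 * e * e'" unfolding e_def e'_def using four_horo_e_mult[OF assms(4,7)] by simp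
  have not_max: "\<not> (4 * e * e' = 1 \<and> e = m)"
  proof
    assume hyp: "4 * e * e' = 1 \<and> e = m"
    then have "e' * (4*m) = 1" by (elim conjE) (simp add: mult_ac)
    then have "e' = 1/(4*m)" using \<open>0 < m\<close> by (simp add: eq_divide_eq)
    moreover have "e = m" using hyp by (rule conjunct2)
    ultimately have "w = horo_e_point \<theta> z m"
      unfolding e_def e'_def by (intro eq_horo_e_pointI[OF assms(4,7,5)])
    with \<open>w \<noteq> horo_e_point \<theta> z m\<close> show False by contradiction
  qed
  have "kernel_log t (c_eta \<eta>) e e' < kernel_log_hyp t (c_eta \<eta>) m"
    using kernel_log_lt_hyp_max[OF assms(1-3,5) max \<open>0 < e\<close> \<open>0 < e'\<close> prod_ge not_max] .
  also have "\<dots>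
      = kernel_log t (c_eta \<eta>) (horo_e \<theta> z (horo_e_point \<theta> z m)) (horo_e' \<theta> z (horo_e_point \<theta> z m))"
    unfolding horo_e_point(2,3)[OF assms(4,5)] by (rule kernel_log_on_hyperbola[OF assms(1,2,5), symmetric])
  finally have "kernel_scale t \<theta> * exp (kernel_log t (c_eta \<eta>) e e')
      < kernel_scale t \<theta> * exp (kernel_log t (c_eta \<eta>)
          (horo_e \<theta> z (horo_e_point \<theta> z m)) (horo_e' \<theta> z (horo_e_point \<theta> z m)))"
    using kernel_scale_pos[OF assms(1,2)] by simp
  then show ?thesis
    unfolding norm_K_eta_horo[OF assms(1,2,4,7)] norm_K_eta_horo[OF assms(1,2,4) horo_e_point(1)[OF assms(4,5)]]
      e_def e'_def .
qed

lemma ex1_strict_max: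
  fixes f :: "'a \<Rightarrow> 'b::linorder"
  assumes "b \<in> A" "\<And>Q. Q \<in> A \<Longrightarrow> Q \<noteq> b \<Longrightarrow> f Q < f b"
  shows "\<exists>!P. P \<in> A \<and> (\<forall>Q\<in>A. f Q \<le> f P)"
proof (rule ex1I[of _ b])
  show "b \<in> A \<and> (\<forall>Q\<in>A. f Q \<le> f b)"
    using assms by (metis order.strict_implies_order order.refl)
next
  fix P assume "P \<in> A \<and> (\<forall>Q\<in>A. f Q \<le> f P)"
  then show "P = b" using assms by (meson leD)
qed

lemma c_eta_gt_one:
  assumes "0 < \<eta>" "\<eta> < 1"
  shows "1 < c_eta \<eta>"
proof -
  have "\<eta>^2 < 1" using assms by (simp add: abs_square_less_1)
  have "\<eta>^3 = \<eta> * \<eta>^2" by (simp add: power3_eq_cube power2_eq_square)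
  also have "\<dots> < \<eta> * 1" using \<open>\<eta>^2 < 1\<close> assms by (intro mult_strict_left_mono)
  finally have "\<eta>^3 < \<eta>" by simp
  moreover have "0 < \<eta>^3" using assms by simp
  ultimately have "0 < 4*\<eta> - \<eta>^3" "4*\<eta> - \<eta>^3 < 4" using assms by linarith+
  then show ?thesis unfolding c_eta_def by simp
qed

lemma Sigma_set_unique_max:
  assumes "0 < t" "t < 1" "t < c_eta \<eta>" "z \<in> upper_half"
  shows "\<exists>!P. P \<in> Sigma_set t \<theta> \<and> (\<forall>Q\<in>Sigma_set t \<theta>. norm (K_eta \<eta> z Q) \<le> norm (K_eta \<eta> z P))"
proof -
  have "0 < Im z" using assms(4) by (simp add: upper_half_def)
  obtain m where m: "0 < m"
    "\<And>E. 0 < E \<Longrightarrow> E \<noteq> m \<Longrightarrow> kernel_log_hyp t (c_eta \<eta>) E < kernel_log_hyp t (c_eta \<eta>) m"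
    using kernel_log_hyp_strict_max[OF assms(1,2)] assms(1,3) by (metis order.strict_trans)
  let ?P = "horo (- \<i> * of_real t) (horo_e_point \<theta> z m) \<theta>"
  show ?thesis
  proof (rule ex1_strict_max)
    show "?P \<in> Sigma_set t \<theta>"
      unfolding Sigma_set_def using horo_e_point(1)[OF \<open>0 < Im z\<close> m(1)] by (intro imageI) (simp add: upper_half_def)
    fix Q assume "Q \<in> Sigma_set t \<theta>" "Q \<noteq> ?P"
    then obtain w where "w \<in> upper_half" and Q: "Q = horo (- \<i> * of_real t) w \<theta>"
      unfolding Sigma_set_def by blast
    with \<open>Q \<noteq> ?P\<close> have "0 < Im w" "w \<noteq> horo_e_point \<theta> z m" by (auto simp: upper_half_def)
    from norm_K_eta_horo_lt_max[OF assms(1-3) \<open>0 < Im z\<close> m this]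
    show "norm (K_eta \<eta> z Q) < norm (K_eta \<eta> z ?P)" unfolding Q .
  qed
qed

theorem lemma3:
  fixes t :: real
  assumes "0 < t" and "t < 1"
  shows "\<forall>\<^sub>F \<eta> in nhds t. \<forall>\<theta>::real. \<forall>z \<in> upper_half.
           \<exists>!P. P \<in> Sigma_set t \<theta> \<and>
                (\<forall>Q \<in> Sigma_set t \<theta>. norm (K_eta \<eta> z Q) \<le> norm (K_eta \<eta> z P))"
proof -
  have "\<forall>\<^sub>F \<eta> in nhds t. \<eta> \<in> {0<..<1}" using assms by (intro eventually_nhds_in_open) auto
  then show ?thesis
  proof (rule eventually_mono)
    fix \<eta> :: real assume "\<eta> \<in> {0<..<1}"
    then have "t < c_eta \<eta>" using c_eta_gt_one[of \<eta>] assms by simp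
    then show "\<forall>\<theta>. \<forall>z\<in>upper_half. \<exists>!P. P \<in> Sigma_set t \<theta> \<and>
                 (\<forall>Q\<in>Sigma_set t \<theta>. norm (K_eta \<eta> z Q) \<le> norm (K_eta \<eta> z P))"
      using Sigma_set_unique_max assms by blast
  qed
qed

end
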